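(* Assume $C^\top C\succ0$, and let $\gamma>0$, $\sigma>0$, $\lambda>0$. Let $X_r=(\widetilde W_r,y_r)$, $r\ge0$, be generated by the alternating scheme of the context from a feasible initial point $\widetilde W_0\in\mathcal{X}_1$, $y_0\in\mathbb{R}^{mn}_+$. Then every cluster point $z=(z_1,z_2)$ of $(X_r)$ is a coordinatewise minimizer of $\widehat H_\sigma$ with respect to the blocks $\widetilde W\in\mathbb{R}^{p^2}$ and $y\in\mathbb{R}^{mn}$, i.e. $\widehat H_\sigma(z_1+d_1,z_2)\ge\widehat H_\sigma(z)$ for all $d_1$ with $(z_1+d_1,z_2)\in\operatorname{dom}\widehat H_\sigma$, and $\widehat H_\sigma(z_1,z_2+d_2)\ge\widehat H_\sigma(z)$ for all $d_2$ with $(z_1,z_2+d_2)\in\operatorname{dom}\widehat H_\sigma$. If in addition $\widehat H_\sigma$ is regular at $z$, then $z$ is a stationary point of $\widehat H_\sigma$.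
   Context: Let $n,m,M\ge1$, $p=m+n$. For $i=1,\dots,M$ let $A_i\in\mathbb{R}^{n\times n}$, $B_{2,i}\in\mathbb{R}^{n\times m}$, $F_i=\begin{bmatrix}A_i&B_{2,i}\\0&0\end{bmatrix}$. Let $B_1\in\mathbb{R}^{n\times l}$, $C\in\mathbb{R}^{q\times n}$, $D\in\mathbb{R}^{q\times m}$ with $C^\top D=0$, $D^\top D\succ0$, $B_1B_1^\top\succ0$; $Q=\begin{bmatrix}B_1B_1^\top&0\\0&0\end{bmatrix}$, $R=\begin{bmatrix}C^\top C&0\\0&D^\top D\end{bmatrix}$, $V_1=[0,\ I_m]$, $V_2=[I_n,\ 0]$, $\Psi_i(W)=-V_2(F_iW+WF_i^\top+Q)V_2^\top$. $\mathrm{vec}$ is column-stacking; $\mathcal{P}:=V_2\otimes V_1$, so $\mathcal{P}\,\mathrm{vec}(W)=\mathrm{vec}(V_1WV_2^\top)$. $\Gamma^k_+=\{\mathrm{vec}(X):X\in\mathbb{S}^k_+\}$, $\delta_S$ the indicator of $S$, $\Omega=\{\mathrm{vec}(W):W_{ij}=0,\ 1\le i<j\le n\}$, $\mathcal{X}_1=\{\mathrm{vec}(W)\in\Gamma^p_+:\mathrm{vec}(\Psi_i(W))\in\Gamma^n_+\ \forall i,\ \mathrm{vec}(W)\in\Omega\}$, $r_1(\widetilde W)=\langle\mathrm{vec}(R),\widetilde W\rangle+\delta_{\mathcal{X}_1}(\widetilde W)$. For $x\in\mathbb{R}^{mn}$, $f_\sigma(x)=\sum_\ell(1-e^{-x_\ell/\sigma})$,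 $g_\sigma=-f_\sigma$, $g_\sigma^*$ its convex conjugate; $|\cdot|$ componentwise. Define $\widehat H_\sigma(\widetilde W,y)=r_1(\widetilde W)+\gamma g^*_\sigma(-y)+\gamma y^\top|\mathcal{P}\widetilde W|+\delta_{\mathbb{R}^{mn}_+}(y)$. Scheme: for $r=1,2,\dots$: if $r$ is odd, $\widetilde W_r=\widetilde W_{r-1}$ and $y_r=\operatorname{argmin}_{y\in\mathbb{R}^{mn}_+}\{\gamma g_\sigma^*(-y)+\gamma y^\top|\mathcal{P}\widetilde W_{r-1}|\}=\nabla f_\sigma(|\mathcal{P}\widetilde W_{r-1}|)$; if $r$ is even, $y_r=y_{r-1}$ and $\widetilde W_r\in\operatorname{argmin}_{\widetilde W\in\mathcal{X}_1}\{\langle\mathrm{vec}(R),\widetilde W\rangle+\gamma y_{r-1}^\top|\mathcal{P}\widetilde W|+\frac1{2\lambda}\|\widetilde W-\widetilde W_{r-1}\|^2\}$. Definitions: for $\phi$ on a convex set $\mathcal{D}$, $\phi'(z;d)=\liminf_{t\downarrow0}\frac{\phi(z+td)-\phi(z)}{t}$; $z$ is a stationary point if $\phi'(z;d)\ge0$ for all $d$ with $z+d\in\mathcal{D}$ (here $\mathcal{D}=\mathcal{X}_1\times\mathbb{R}^{mn}_+$). $\widehat H_\sigma$ is regular at $z$ (w.r.t. the two blocks) if $\widehat H_\sigma'(z;d)\ge0$ for every $d=(d_1,d_2)$ such that $\widehat H_\sigma'(z;(d_1,0))\ge0$ and $\widehat H_\sigma'(z;(0,d_2))\ge0$. *)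

theory Defs
  imports "Jordan_Normal_Form.Matrix" "HOL-Library.Extended_Real" "HOL-Library.Liminf_Limsup"
begin

(* Conventions: vectors are JNF 'real vec', matrices 'real mat'; indices are 0-based
   (the paper's 1-based index i corresponds to i-1 here). p = m + n. *)

definition psd :: "nat \<Rightarrow> real mat \<Rightarrow> bool" where
  "psd k X \<longleftrightarrow> X \<in> carrier_mat k k \<and> X\<^sup>T = X \<and> (\<forall>x\<in>carrier_vec k. 0 \<le> x \<bullet> (X *\<^sub>v x))"

definition pd :: "nat \<Rightarrow> real mat \<Rightarrow> bool" where
  "pd k X \<longleftrightarrow> X \<in> carrier_mat k k \<and> X\<^sup>T = X \<and>
     (\<forall>x\<in>carrier_vec k. x \<noteq> 0\<^sub>v k \<longrightarrow> 0 < x \<bullet> (X *\<^sub>v x))"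

definition vecm :: "real mat \<Rightarrow> real vec" where
  "vecm X = vec (dim_row X * dim_col X) (\<lambda>k. X $$ (k mod dim_row X, k div dim_row X))"

definition Gamma_plus :: "nat \<Rightarrow> real vec set" where
  "Gamma_plus k = vecm ` {X. psd k X}"

definition kron :: "real mat \<Rightarrow> real mat \<Rightarrow> real mat" where
  "kron A B = mat (dim_row A * dim_row B) (dim_col A * dim_col B)
     (\<lambda>(i,j). A $$ (i div dim_row B, j div dim_col B) * B $$ (i mod dim_row B, j mod dim_col B))"

text \<open>V1 = [0, I_m] (m x p), V2 = [I_n, 0] (n x p)\<close>
definition V1 :: "nat \<Rightarrow> nat \<Rightarrow> real mat" where
  "V1 n m = mat m (m + n) (\<lambda>(i,j). if j = n + i then 1 else 0)"

definition V2 :: "nat \<Rightarrow> nat \<Rightarrow> real mat" where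
  "V2 n m = mat n (m + n) (\<lambda>(i,j). if j = i then 1 else 0)"

definition Pop :: "nat \<Rightarrow> nat \<Rightarrow> real mat" where
  "Pop n m = kron (V2 n m) (V1 n m)"

definition Fm :: "nat \<Rightarrow> nat \<Rightarrow> real mat \<Rightarrow> real mat \<Rightarrow> real mat" where
  "Fm n m A B2 = four_block_mat A B2 (0\<^sub>m m n) (0\<^sub>m m m)"

definition Qm :: "nat \<Rightarrow> nat \<Rightarrow> real mat \<Rightarrow> real mat" where
  "Qm n m B1 = four_block_mat (B1 * B1\<^sup>T) (0\<^sub>m n m) (0\<^sub>m m n) (0\<^sub>m m m)"

definition Rm :: "nat \<Rightarrow> nat \<Rightarrow> real mat \<Rightarrow> real mat \<Rightarrow> real mat" where
  "Rm n m C D = four_block_mat (C\<^sup>T * C) (0\<^sub>m n m) (0\<^sub>m m n) (D\<^sup>T * D)"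

definition Psi :: "nat \<Rightarrow> nat \<Rightarrow> real mat \<Rightarrow> real mat \<Rightarrow> real mat \<Rightarrow> real mat \<Rightarrow> real mat" where
  "Psi n m A B2 B1 W =
     - (V2 n m * (Fm n m A B2 * W + W * (Fm n m A B2)\<^sup>T + Qm n m B1) * (V2 n m)\<^sup>T)"

definition Omega :: "nat \<Rightarrow> nat \<Rightarrow> real vec set" where
  "Omega n m = {vecm W | W. W \<in> carrier_mat (m + n) (m + n) \<and>
                   (\<forall>i j. i < j \<and> j < n \<longrightarrow> W $$ (i, j) = 0)}"

text \<open>X_1; the family A_i, B_{2,i} is indexed by i in {1..M}\<close>
definition X1 :: "nat \<Rightarrow> nat \<Rightarrow> nat \<Rightarrow> (nat \<Rightarrow> real mat) \<Rightarrow> (nat \<Rightarrow> real mat) \<Rightarrow> real mat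
    \<Rightarrow> real vec set" where
  "X1 n m M A B2 B1 = {vecm W | W. W \<in> carrier_mat (m + n) (m + n) \<and> vecm W \<in> Gamma_plus (m + n) \<and>
       (\<forall>i\<in>{1..M}. vecm (Psi n m (A i) (B2 i) B1 W) \<in> Gamma_plus n) \<and> vecm W \<in> Omega n m}"

definition nonneg_orthant :: "nat \<Rightarrow> real vec set" where
  "nonneg_orthant k = {y \<in> carrier_vec k. \<forall>i<k. 0 \<le> y $ i}"

definition vabs :: "real vec \<Rightarrow> real vec" where
  "vabs v = map_vec abs v"

definition fsig :: "real \<Rightarrow> real vec \<Rightarrow> real" where
  "fsig \<sigma> x = (\<Sum>l<dim_vec x. 1 - exp (- x $ l / \<sigma>))"

definition gsig :: "real \<Rightarrow> real vec \<Rightarrow> real" where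
  "gsig \<sigma> x = - fsig \<sigma> x"

definition conj_fun :: "nat \<Rightarrow> (real vec \<Rightarrow> real) \<Rightarrow> real vec \<Rightarrow> ereal" where
  "conj_fun N g u = (SUP x\<in>carrier_vec N. ereal (u \<bullet> x - g x))"

definition r1 :: "nat \<Rightarrow> nat \<Rightarrow> nat \<Rightarrow> (nat \<Rightarrow> real mat) \<Rightarrow> (nat \<Rightarrow> real mat) \<Rightarrow> real mat
    \<Rightarrow> real mat \<Rightarrow> real mat \<Rightarrow> real vec \<Rightarrow> ereal" where
  "r1 n m M A B2 B1 C D w =
     ereal (vecm (Rm n m C D) \<bullet> w) + (if w \<in> X1 n m M A B2 B1 then 0 else \<infinity>)"

definition Hhat :: "nat \<Rightarrow> nat \<Rightarrow> nat \<Rightarrow> (nat \<Rightarrow> real mat) \<Rightarrow> (nat \<Rightarrow> real mat) \<Rightarrow> real mat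
    \<Rightarrow> real mat \<Rightarrow> real mat \<Rightarrow> real \<Rightarrow> real \<Rightarrow> real vec \<times> real vec \<Rightarrow> ereal" where
  "Hhat n m M A B2 B1 C D \<gamma> \<sigma> z =
     r1 n m M A B2 B1 C D (fst z)
     + ereal \<gamma> * conj_fun (m * n) (gsig \<sigma>) (- snd z)
     + ereal (\<gamma> * (snd z \<bullet> vabs (Pop n m *\<^sub>v fst z)))
     + (if snd z \<in> nonneg_orthant (m * n) then 0 else \<infinity>)"

definition dir_deriv :: "(real vec \<times> real vec \<Rightarrow> ereal) \<Rightarrow> real vec \<times> real vec
    \<Rightarrow> real vec \<times> real vec \<Rightarrow> ereal" where
  "dir_deriv \<phi> z d = Liminf (at_right 0)
     (\<lambda>t. (\<phi> (fst z + t \<cdot>\<^sub>v fst d, snd z + t \<cdot>\<^sub>v snd d) - \<phi> z) / ereal t)"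

definition stationary :: "(real vec \<times> real vec \<Rightarrow> ereal) \<Rightarrow> (real vec \<times> real vec) set
    \<Rightarrow> real vec \<times> real vec \<Rightarrow> bool" where
  "stationary \<phi> Dom z \<longleftrightarrow>
     (\<forall>d. (fst z + fst d, snd z + snd d) \<in> Dom \<longrightarrow> 0 \<le> dir_deriv \<phi> z d)"

definition regular_at :: "(real vec \<times> real vec \<Rightarrow> ereal) \<Rightarrow> nat \<Rightarrow> nat
    \<Rightarrow> real vec \<times> real vec \<Rightarrow> bool" where
  "regular_at \<phi> N1 N2 z \<longleftrightarrow>
     (\<forall>d1\<in>carrier_vec N1. \<forall>d2\<in>carrier_vec N2.
        0 \<le> dir_deriv \<phi> z (d1, 0\<^sub>v N2) \<and> 0 \<le> dir_deriv \<phi> z (0\<^sub>v N1, d2)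
        \<longrightarrow> 0 \<le> dir_deriv \<phi> z (d1, d2))"

definition edom :: "('a \<Rightarrow> ereal) \<Rightarrow> 'a set" where
  "edom \<phi> = {x. \<phi> x < \<infinity>}"

end

theory Submission
  imports Defs
begin

text \<open>
  On its domain \<open>X1 \<times> \<real>\<^sup>m\<^sup>n\<^sub>+\<close> the objective splits as
  \<open>H (W, y) = \<langle>c, W\<rangle> + \<gamma> (h y + \<langle>y, \<bar>P W\<bar>\<rangle>)\<close> with \<open>h y = g\<^sub>\<sigma>\<^sup>* (-y)\<close> nonnegative and lower
  semicontinuous. Odd steps minimise \<open>H\<close> exactly in \<open>y\<close> and even steps are proximal steps in \<open>W\<close>,
  so \<open>H\<close> decreases along the iterates by at least \<open>\<parallel>W\<^sub>r\<^sub>+\<^sub>1 - W\<^sub>r\<parallel>\<^sup>2 / (2 \<lambda>)\<close>. Along the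
  convergent subsequence \<open>H\<close> stays bounded below, so the steps \<open>W\<^sub>r\<^sub>+\<^sub>1 - W\<^sub>r\<close> tend to zero and
  the odd and even steps surrounding each index of the subsequence have the same limit \<open>z\<close>.
  Passing to the limit in the optimality of the \<open>W\<close>-step gives a proximal inequality at \<open>z\<^sub>1\<close>,
  whose proximal term is removed by convexity of \<open>X1\<close> and of \<open>W \<mapsto> \<langle>c, W\<rangle> + \<gamma> \<langle>z\<^sub>2, \<bar>P W\<bar>\<rangle>\<close>;
  in the \<open>y\<close>-step only lower semicontinuity of \<open>h\<close> is needed. Blockwise minimality makes both
  block directional derivatives nonnegative, and regularity then gives stationarity.
\<close>

section \<open>Scalar products and coordinatewise limits\<close>

definition converges_coordwise :: "nat \<Rightarrow> (nat \<Rightarrow> real vec) \<Rightarrow> real vec \<Rightarrow> bool" where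
  "converges_coordwise N f a \<longleftrightarrow> (\<forall>k<N. (\<lambda>r. f r $ k) \<longlonglongrightarrow> a $ k)"

lemma scalar_prod_as_sum: "(w :: 'a :: comm_semiring_0 vec) \<in> carrier_vec N \<Longrightarrow> b \<bullet> w = (\<Sum>k<N. b $ k * w $ k)"
  by (simp add: scalar_prod_def atLeast0LessThan)

lemma coupling_as_sum:
  fixes y w :: "real vec"
  assumes "P \<in> carrier_mat K N" "w \<in> carrier_vec N"
  shows "y \<bullet> vabs (P *\<^sub>v w) = (\<Sum>i<K. y $ i * \<bar>\<Sum>k<N. P $$ (i, k) * w $ k\<bar>)"
  using assms by (auto simp: vabs_def scalar_prod_def atLeast0LessThan intro!: sum.cong)

lemma coupling_nonneg:
  "P \<in> carrier_mat K N \<Longrightarrow> w \<in> carrier_vec N \<Longrightarrow> y \<in> nonneg_orthant K \<Longrightarrow> 0 \<le> y \<bullet> vabs (P *\<^sub>v w)"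
  by (auto simp: coupling_as_sum nonneg_orthant_def intro!: sum_nonneg)

lemma scalar_prod_convex_comb:
  fixes b w1 w2 :: "real vec"
  assumes "w1 \<in> carrier_vec N" "w2 \<in> carrier_vec N"
  shows "b \<bullet> ((1 - t) \<cdot>\<^sub>v w1 + t \<cdot>\<^sub>v w2) = (1 - t) * (b \<bullet> w1) + t * (b \<bullet> w2)"
  using assms
  by (auto simp: scalar_prod_as_sum[of _ N] sum_distrib_left sum.distrib[symmetric] algebra_simps
      intro!: sum.cong)

lemma coupling_convex:
  fixes y w1 w2 :: "real vec"
  assumes P: "P \<in> carrier_mat K N" and w: "w1 \<in> carrier_vec N" "w2 \<in> carrier_vec N"
    and y: "y \<in> nonneg_orthant K" and t: "0 \<le> t" "t \<le> 1"
  shows "y \<bullet> vabs (P *\<^sub>v ((1 - t) \<cdot>\<^sub>v w1 + t \<cdot>\<^sub>v w2))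
    \<le> (1 - t) * (y \<bullet> vabs (P *\<^sub>v w1)) + t * (y \<bullet> vabs (P *\<^sub>v w2))"
proof -
  define u where "u w i = (\<Sum>k<N. P $$ (i, k) * w $ k)" for w i
  have u_comb: "u ((1 - t) \<cdot>\<^sub>v w1 + t \<cdot>\<^sub>v w2) i = (1 - t) * u w1 i + t * u w2 i" for i
    using w by (auto simp: u_def sum_distrib_left sum.distrib[symmetric] algebra_simps intro!: sum.cong)
  have "\<bar>(1 - t) * u w1 i + t * u w2 i\<bar> \<le> (1 - t) * \<bar>u w1 i\<bar> + t * \<bar>u w2 i\<bar>" for i
    using abs_triangle_ineq[of "(1 - t) * u w1 i" "t * u w2 i"] t by (simp add: abs_mult)
  then have "y $ i * \<bar>(1 - t) * u w1 i + t * u w2 i\<bar> \<le> (1 - t) * (y $ i * \<bar>u w1 i\<bar>) + t * (y $ i * \<bar>u w2 i\<bar>)"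
    if "i < K" for i
    using y that mult_left_mono[of _ _ "y $ i"] unfolding nonneg_orthant_def by (fastforce simp: algebra_simps)
  then have "(\<Sum>i<K. y $ i * \<bar>u ((1 - t) \<cdot>\<^sub>v w1 + t \<cdot>\<^sub>v w2) i\<bar>)
      \<le> (1 - t) * (\<Sum>i<K. y $ i * \<bar>u w1 i\<bar>) + t * (\<Sum>i<K. y $ i * \<bar>u w2 i\<bar>)"
    unfolding u_comb sum_distrib_left sum.distrib[symmetric] by (intro sum_mono) simp
  then show ?thesis
    using w by (simp add: coupling_as_sum[OF P] u_def)
qed

lemma sqdist_convex_comb:
  fixes z w :: "real vec"
  assumes "z \<in> carrier_vec N" "w \<in> carrier_vec N"
  shows "((1 - t) \<cdot>\<^sub>v z + t \<cdot>\<^sub>v w - z) \<bullet> ((1 - t) \<cdot>\<^sub>v z + t \<cdot>\<^sub>v w - z) = t\<^sup>2 * ((w - z) \<bullet> (w - z))"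
  using assms
  by (auto simp: scalar_prod_as_sum[of _ N] sum_distrib_left power2_eq_square algebra_simps
      intro!: sum.cong)

lemma scalar_prod_self_nonneg: "0 \<le> (v :: real vec) \<bullet> v"
  by (simp add: scalar_prod_def sum_nonneg)

lemma coord_diff_sq_le_sqdist:
  fixes v w :: "real vec"
  assumes "v \<in> carrier_vec N" "w \<in> carrier_vec N" "k < N"
  shows "(v $ k - w $ k)\<^sup>2 \<le> (v - w) \<bullet> (v - w)"
proof -
  have "(v $ k - w $ k)\<^sup>2 \<le> (\<Sum>j<N. (v $ j - w $ j)\<^sup>2)"
    using assms(3) by (intro member_le_sum[where f = "\<lambda>j. (v $ j - w $ j)\<^sup>2"]) auto
  then show ?thesis
    using assms by (simp add: scalar_prod_as_sum[of _ N] power2_eq_square)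
qed

lemma tendsto_scalar_prod_coordwise:
  assumes "\<And>r. f r \<in> carrier_vec N" "a \<in> carrier_vec N" "converges_coordwise N f a"
  shows "(\<lambda>r. b \<bullet> f r) \<longlonglongrightarrow> b \<bullet> a"
  unfolding scalar_prod_as_sum[OF assms(1)] scalar_prod_as_sum[OF assms(2)]
  using assms(3) unfolding converges_coordwise_def by (intro tendsto_intros) auto

lemma tendsto_coupling_coordwise:
  assumes P: "P \<in> carrier_mat K N" and f: "\<And>r. f r \<in> carrier_vec N" "a \<in> carrier_vec N"
    and "converges_coordwise N f a" "converges_coordwise K g b"
  shows "(\<lambda>r. g r \<bullet> vabs (P *\<^sub>v f r)) \<longlonglongrightarrow> b \<bullet> vabs (P *\<^sub>v a)"
  unfolding coupling_as_sum[OF P f(1)] coupling_as_sum[OF P f(2)]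
  using assms(4,5) unfolding converges_coordwise_def by (intro tendsto_intros) auto

lemma tendsto_sqdist_coordwise:
  fixes w :: "real vec"
  assumes "\<And>r. f r \<in> carrier_vec N" "a \<in> carrier_vec N" "w \<in> carrier_vec N" "converges_coordwise N f a"
  shows "(\<lambda>r. (w - f r) \<bullet> (w - f r)) \<longlonglongrightarrow> (w - a) \<bullet> (w - a)"
proof -
  have sqdist: "(w - v) \<bullet> (w - v) = (\<Sum>k<N. (w $ k - v $ k)\<^sup>2)" if "v \<in> carrier_vec N" for v
    using that assms(3) by (auto simp: scalar_prod_as_sum[of _ N] power2_eq_square intro!: sum.cong)
  show ?thesis
    unfolding sqdist[OF assms(1)] sqdist[OF assms(2)]
    using assms(4) unfolding converges_coordwise_def by (intro tendsto_intros) auto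
qed

lemma converges_coordwise_uminus:
  assumes "\<And>r. f r \<in> carrier_vec N" "a \<in> carrier_vec N" "converges_coordwise N f a"
  shows "converges_coordwise N (\<lambda>r. - f r) (- a)"
proof -
  have "dim_vec (f r) = N" "dim_vec a = N" for r using assms(1,2) by auto
  then show ?thesis using assms(3) unfolding converges_coordwise_def by (auto intro: tendsto_minus)
qed

section \<open>Vectorisation and the feasible set \<open>X1\<close>\<close>

definition unvec :: "nat \<Rightarrow> real vec \<Rightarrow> real mat" where
  "unvec k w = mat k k (\<lambda>(i, j). w $ (i + j * k))"

lemma dim_vecm [simp]: "dim_vec (vecm X) = dim_row X * dim_col X"
  by (simp add: vecm_def)

lemma index_vecm: "i < dim_row X * dim_col X \<Longrightarrow> vecm X $ i = X $$ (i mod dim_row X, i div dim_row X)"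
  by (simp add: vecm_def)

lemma unvec_carrier [simp]: "unvec k w \<in> carrier_mat k k"
  by (simp add: unvec_def)

lemma dim_unvec [simp]: "dim_row (unvec k w) = k" "dim_col (unvec k w) = k"
  by (simp_all add: unvec_def)

lemma index_unvec [simp]: "i < k \<Longrightarrow> j < k \<Longrightarrow> unvec k w $$ (i, j) = w $ (i + j * k)"
  by (simp add: unvec_def)

lemma column_major_index_less: "i < k \<Longrightarrow> j < k \<Longrightarrow> i + j * k < k * (k::nat)"
proof -
  assume "i < k" "j < k"
  then have "i + j * k < Suc j * k" by simp
  also have "\<dots> \<le> k * k" using \<open>j < k\<close> by (metis Suc_leI mult.commute mult_le_mono2)
  finally show ?thesis .
qed

lemma unvec_vecm: "W \<in> carrier_mat k k \<Longrightarrow> unvec k (vecm W) = W"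
  by (rule eq_matI) (auto simp: index_vecm column_major_index_less)

lemma vecm_unvec: "w \<in> carrier_vec (k * k) \<Longrightarrow> vecm (unvec k w) = w"
proof (rule eq_vecI)
  fix i assume "w \<in> carrier_vec (k * k)" "i < dim_vec w"
  then have "i < k * k" by simp
  moreover have "i div k < k" using \<open>i < k * k\<close> by (simp add: less_mult_imp_div_less)
  ultimately show "vecm (unvec k w) $ i = w $ i"
    by (simp add: index_vecm)
qed simp

lemma unvec_lincomb:
  assumes "v \<in> carrier_vec (k * k)" "w \<in> carrier_vec (k * k)"
  shows "unvec k (a \<cdot>\<^sub>v v + b \<cdot>\<^sub>v w) = a \<cdot>\<^sub>m unvec k v + b \<cdot>\<^sub>m unvec k w"
  by (rule eq_matI) (use assms column_major_index_less in \<open>auto simp: unvec_def\<close>)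

lemma vecm_in_Gamma_plus_iff: "X \<in> carrier_mat k k \<Longrightarrow> vecm X \<in> Gamma_plus k \<longleftrightarrow> psd k X"
proof
  assume X: "X \<in> carrier_mat k k" and "vecm X \<in> Gamma_plus k"
  then obtain Y where "psd k Y" "vecm X = vecm Y" unfolding Gamma_plus_def by auto
  moreover have "Y \<in> carrier_mat k k" using \<open>psd k Y\<close> unfolding psd_def by simp
  ultimately show "psd k X" using X unvec_vecm by metis
qed (auto simp: Gamma_plus_def)

lemma psd_iff_entries:
  "psd k X \<longleftrightarrow> X \<in> carrier_mat k k \<and> (\<forall>i<k. \<forall>j<k. X $$ (j, i) = X $$ (i, j)) \<and>
     (\<forall>x\<in>carrier_vec k. 0 \<le> (\<Sum>i<k. x $ i * (\<Sum>j<k. X $$ (i, j) * x $ j)))"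
proof (cases "X \<in> carrier_mat k k")
  case True
  have "x \<bullet> (X *\<^sub>v x) = (\<Sum>i<k. x $ i * (\<Sum>j<k. X $$ (i, j) * x $ j))"
    if "x \<in> carrier_vec k" for x
    using True that by (auto simp: scalar_prod_def atLeast0LessThan intro!: sum.cong)
  moreover have "X\<^sup>T = X \<longleftrightarrow> (\<forall>i<k. \<forall>j<k. X $$ (j, i) = X $$ (i, j))"
  proof
    assume "X\<^sup>T = X"
    then show "\<forall>i<k. \<forall>j<k. X $$ (j, i) = X $$ (i, j)"
      using True by (metis carrier_matD(1,2) index_transpose_mat(1))
  qed (use True in \<open>auto intro!: eq_matI\<close>)
  ultimately show ?thesis
    unfolding psd_def by auto
qed (simp add: psd_def)

lemma psd_lincomb:
  assumes "psd k X" "psd k Y" "0 \<le> a" "0 \<le> b"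
  shows "psd k (a \<cdot>\<^sub>m X + b \<cdot>\<^sub>m Y)"
  unfolding psd_iff_entries
proof (intro conjI allI impI ballI)
  have X: "X \<in> carrier_mat k k" and Y: "Y \<in> carrier_mat k k"
    using assms(1,2) by (simp_all add: psd_def)
  then show "a \<cdot>\<^sub>m X + b \<cdot>\<^sub>m Y \<in> carrier_mat k k" by simp
  fix i j assume ij: "i < k" "j < k"
  then have "X $$ (j, i) = X $$ (i, j)" "Y $$ (j, i) = Y $$ (i, j)"
    using assms(1,2) unfolding psd_iff_entries by auto
  then show "(a \<cdot>\<^sub>m X + b \<cdot>\<^sub>m Y) $$ (j, i) = (a \<cdot>\<^sub>m X + b \<cdot>\<^sub>m Y) $$ (i, j)"
    using X Y ij by simp
next
  fix x :: "real vec" assume x: "x \<in> carrier_vec k"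
  have X: "X \<in> carrier_mat k k" and Y: "Y \<in> carrier_mat k k"
    using assms(1,2) by (simp_all add: psd_def)
  have "(\<Sum>i<k. x $ i * (\<Sum>j<k. (a \<cdot>\<^sub>m X + b \<cdot>\<^sub>m Y) $$ (i, j) * x $ j)) =
     a * (\<Sum>i<k. x $ i * (\<Sum>j<k. X $$ (i, j) * x $ j)) + b * (\<Sum>i<k. x $ i * (\<Sum>j<k. Y $$ (i, j) * x $ j))"
    using X Y by (simp add: sum_distrib_left sum.distrib[symmetric] algebra_simps)
  moreover have "0 \<le> (\<Sum>i<k. x $ i * (\<Sum>j<k. X $$ (i, j) * x $ j))"
    "0 \<le> (\<Sum>i<k. x $ i * (\<Sum>j<k. Y $$ (i, j) * x $ j))"
    using assms(1,2) x unfolding psd_iff_entries by auto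
  ultimately show "0 \<le> (\<Sum>i<k. x $ i * (\<Sum>j<k. (a \<cdot>\<^sub>m X + b \<cdot>\<^sub>m Y) $$ (i, j) * x $ j))"
    using assms(3,4) by simp
qed

lemma psd_limit:
  assumes "\<And>r. psd k (X r)" "Z \<in> carrier_mat k k"
    and lim: "\<And>i j. i < k \<Longrightarrow> j < k \<Longrightarrow> (\<lambda>r. X r $$ (i, j)) \<longlonglongrightarrow> Z $$ (i, j)"
  shows "psd k Z"
  unfolding psd_iff_entries
proof (intro conjI allI impI ballI)
  fix i j assume ij: "i < k" "j < k"
  have "(\<lambda>r. X r $$ (j, i)) = (\<lambda>r. X r $$ (i, j))"
    using assms(1) ij unfolding psd_iff_entries by auto
  then show "Z $$ (j, i) = Z $$ (i, j)" using lim ij LIMSEQ_unique by metis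
next
  fix x :: "real vec" assume x: "x \<in> carrier_vec k"
  have "(\<lambda>r. \<Sum>i<k. x $ i * (\<Sum>j<k. X r $$ (i, j) * x $ j))
      \<longlonglongrightarrow> (\<Sum>i<k. x $ i * (\<Sum>j<k. Z $$ (i, j) * x $ j))"
    using lim by (intro tendsto_intros) auto
  moreover have "\<forall>r. 0 \<le> (\<Sum>i<k. x $ i * (\<Sum>j<k. X r $$ (i, j) * x $ j))"
    using assms(1) x unfolding psd_iff_entries by auto
  ultimately show "0 \<le> (\<Sum>i<k. x $ i * (\<Sum>j<k. Z $$ (i, j) * x $ j))"
    by (meson LIMSEQ_le_const)
qed (use assms(2) in simp)

lemma index_mult_mat_sum:
  "A \<in> carrier_mat a k \<Longrightarrow> B \<in> carrier_mat k b \<Longrightarrow> i < a \<Longrightarrow> j < b \<Longrightarrow>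
    (A * B) $$ (i, j) = (\<Sum>c<k. A $$ (i, c) * B $$ (c, j))"
  by (auto simp: scalar_prod_def atLeast0LessThan intro!: sum.cong)

lemma dim_V2 [simp]: "dim_row (V2 n m) = n" "dim_col (V2 n m) = m + n"
  by (simp_all add: V2_def)

lemma V2_carrier: "V2 n m \<in> carrier_mat n (m + n)"
  by (simp add: carrier_matI)

lemma index_V2_sandwich:
  assumes "i < n" "j < n" "X \<in> carrier_mat (m + n) (m + n)"
  shows "(V2 n m * X * (V2 n m)\<^sup>T) $$ (i, j) = X $$ (i, j)"
proof -
  have V2X: "V2 n m * X \<in> carrier_mat n (m + n)"
    using assms(3) V2_carrier by (metis mult_carrier_mat)
  have V2_row: "(\<Sum>c<m + n. V2 n m $$ (i', c) * f c) = f i'" if "i' < n" for i' and f :: "nat \<Rightarrow> real"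
  proof -
    have "(\<Sum>c<m + n. V2 n m $$ (i', c) * f c) = (\<Sum>c<m + n. if c = i' then f c else 0)"
      using that by (intro sum.cong) (auto simp: V2_def)
    then show ?thesis using that by simp
  qed
  have "(V2 n m * X) $$ (i, b) = X $$ (i, b)" if "b < m + n" for b
    using index_mult_mat_sum[OF V2_carrier assms(3) assms(1) that] V2_row[OF assms(1)] by simp
  then have "(V2 n m * X * (V2 n m)\<^sup>T) $$ (i, j) = (\<Sum>c<m + n. V2 n m $$ (j, c) * X $$ (i, c))"
    using index_mult_mat_sum[OF V2X _ assms(1) assms(2), of "(V2 n m)\<^sup>T"] assms V2_carrier
    by (auto simp: mult.commute V2_def intro!: sum.cong)
  also have "\<dots> = X $$ (i, j)"
    by (rule V2_row[OF assms(2)])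
  finally show ?thesis .
qed

lemma dim_Psi [simp]: "dim_row (Psi n m A B2 B1 W) = n" "dim_col (Psi n m A B2 B1 W) = n"
  by (simp_all add: Psi_def)

lemma Psi_carrier: "Psi n m A B2 B1 W \<in> carrier_mat n n"
  by (simp add: carrier_matI)

lemma index_Psi:
  assumes "A \<in> carrier_mat n n" "B2 \<in> carrier_mat n m" "B1 \<in> carrier_mat n l"
    and W: "W \<in> carrier_mat (m + n) (m + n)" and ij: "i < n" "j < n"
  shows "Psi n m A B2 B1 W $$ (i, j) =
    - ((\<Sum>c<m + n. Fm n m A B2 $$ (i, c) * W $$ (c, j))
       + (\<Sum>c<m + n. W $$ (i, c) * Fm n m A B2 $$ (j, c)) + Qm n m B1 $$ (i, j))"
proof -
  let ?F = "Fm n m A B2" and ?Q = "Qm n m B1"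
  have F: "?F \<in> carrier_mat (m + n) (m + n)"
    unfolding Fm_def using assms(1,2) by (metis add.commute four_block_carrier_mat zero_carrier_mat)
  have Q: "?Q \<in> carrier_mat (m + n) (m + n)"
    unfolding Qm_def using assms(3)
    by (metis add.commute four_block_carrier_mat zero_carrier_mat mult_carrier_mat transpose_carrier_mat)
  have ij': "i < m + n" "j < m + n" using ij by auto
  have X: "?F * W + W * ?F\<^sup>T + ?Q \<in> carrier_mat (m + n) (m + n)"
    using F W Q by simp
  have "Psi n m A B2 B1 W $$ (i, j) = - ((V2 n m * (?F * W + W * ?F\<^sup>T + ?Q) * (V2 n m)\<^sup>T) $$ (i, j))"
    unfolding Psi_def using ij X V2_carrier by (subst index_uminus_mat) auto
  also have "\<dots> = - ((?F * W + W * ?F\<^sup>T + ?Q) $$ (i, j))"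
    using index_V2_sandwich[OF ij X] by simp
  also have "\<dots> = - ((?F * W) $$ (i, j) + (W * ?F\<^sup>T) $$ (i, j) + ?Q $$ (i, j))"
    using F W Q ij' by simp
  also have "(?F * W) $$ (i, j) = (\<Sum>c<m + n. ?F $$ (i, c) * W $$ (c, j))"
    using index_mult_mat_sum[OF F W ij'] .
  also have "(W * ?F\<^sup>T) $$ (i, j) = (\<Sum>c<m + n. W $$ (i, c) * ?F $$ (j, c))"
    using index_mult_mat_sum[OF W _ ij', of "?F\<^sup>T"] F ij' by (auto intro!: sum.cong)
  finally show ?thesis .
qed

lemma Psi_convex_comb:
  assumes "A \<in> carrier_mat n n" "B2 \<in> carrier_mat n m" "B1 \<in> carrier_mat n l"
    and W: "W1 \<in> carrier_mat (m + n) (m + n)" "W2 \<in> carrier_mat (m + n) (m + n)"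
  shows "Psi n m A B2 B1 ((1 - t) \<cdot>\<^sub>m W1 + t \<cdot>\<^sub>m W2)
    = (1 - t) \<cdot>\<^sub>m Psi n m A B2 B1 W1 + t \<cdot>\<^sub>m Psi n m A B2 B1 W2"
proof (rule eq_matI)
  let ?F = "Fm n m A B2" and ?W = "(1 - t) \<cdot>\<^sub>m W1 + t \<cdot>\<^sub>m W2"
  have W': "?W \<in> carrier_mat (m + n) (m + n)" using W by simp
  fix i j assume "i < dim_row ((1 - t) \<cdot>\<^sub>m Psi n m A B2 B1 W1 + t \<cdot>\<^sub>m Psi n m A B2 B1 W2)"
    "j < dim_col ((1 - t) \<cdot>\<^sub>m Psi n m A B2 B1 W1 + t \<cdot>\<^sub>m Psi n m A B2 B1 W2)"
  then have ij: "i < n" "j < n" by simp_all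
  have sums: "(\<Sum>c<m + n. ?F $$ (i, c) * ?W $$ (c, j))
      = (1 - t) * (\<Sum>c<m + n. ?F $$ (i, c) * W1 $$ (c, j)) + t * (\<Sum>c<m + n. ?F $$ (i, c) * W2 $$ (c, j))"
    "(\<Sum>c<m + n. ?W $$ (i, c) * ?F $$ (j, c))
      = (1 - t) * (\<Sum>c<m + n. W1 $$ (i, c) * ?F $$ (j, c)) + t * (\<Sum>c<m + n. W2 $$ (i, c) * ?F $$ (j, c))"
    using W ij by (auto simp: sum_distrib_left sum.distrib[symmetric] algebra_simps intro!: sum.cong)
  have "((1 - t) \<cdot>\<^sub>m Psi n m A B2 B1 W1 + t \<cdot>\<^sub>m Psi n m A B2 B1 W2) $$ (i, j)
      = (1 - t) * Psi n m A B2 B1 W1 $$ (i, j) + t * Psi n m A B2 B1 W2 $$ (i, j)"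
    using ij by simp
  then show "Psi n m A B2 B1 ?W $$ (i, j)
      = ((1 - t) \<cdot>\<^sub>m Psi n m A B2 B1 W1 + t \<cdot>\<^sub>m Psi n m A B2 B1 W2) $$ (i, j)"
    unfolding index_Psi[OF assms(1-3) W' ij] index_Psi[OF assms(1-3) W(1) ij]
      index_Psi[OF assms(1-3) W(2) ij] sums
    by (simp add: algebra_simps)
qed simp_all

lemma tendsto_index_Psi:
  assumes "A \<in> carrier_mat n n" "B2 \<in> carrier_mat n m" "B1 \<in> carrier_mat n l"
    and W: "\<And>r. Ws r \<in> carrier_mat (m + n) (m + n)" "W \<in> carrier_mat (m + n) (m + n)"
    and lim: "\<And>a b. a < m + n \<Longrightarrow> b < m + n \<Longrightarrow> (\<lambda>r. Ws r $$ (a, b)) \<longlonglongrightarrow> W $$ (a, b)"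
    and ij: "i < n" "j < n"
  shows "(\<lambda>r. Psi n m A B2 B1 (Ws r) $$ (i, j)) \<longlonglongrightarrow> Psi n m A B2 B1 W $$ (i, j)"
  unfolding index_Psi[OF assms(1-3) W(1) ij] index_Psi[OF assms(1-3) W(2) ij]
  using ij by (intro tendsto_intros lim) auto

definition lmi_feasible ::
    "nat \<Rightarrow> nat \<Rightarrow> nat \<Rightarrow> (nat \<Rightarrow> real mat) \<Rightarrow> (nat \<Rightarrow> real mat) \<Rightarrow> real mat \<Rightarrow> real mat \<Rightarrow> bool" where
  "lmi_feasible n m M A B2 B1 W \<longleftrightarrow> psd (m + n) W \<and> (\<forall>i\<in>{1..M}. psd n (Psi n m (A i) (B2 i) B1 W))
     \<and> (\<forall>i j. i < j \<and> j < n \<longrightarrow> W $$ (i, j) = 0)"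

lemma X1_iff_lmi_feasible:
  "w \<in> X1 n m M A B2 B1 \<longleftrightarrow>
     w \<in> carrier_vec ((m + n) * (m + n)) \<and> lmi_feasible n m M A B2 B1 (unvec (m + n) w)"
proof
  assume "w \<in> X1 n m M A B2 B1"
  then obtain W where W: "w = vecm W" "W \<in> carrier_mat (m + n) (m + n)" "vecm W \<in> Gamma_plus (m + n)"
      "\<forall>i\<in>{1..M}. vecm (Psi n m (A i) (B2 i) B1 W) \<in> Gamma_plus n" "vecm W \<in> Omega n m"
    unfolding X1_def by auto
  from W(5) obtain W' where W': "vecm W = vecm W'" "W' \<in> carrier_mat (m + n) (m + n)"
      "\<forall>i j. i < j \<and> j < n \<longrightarrow> W' $$ (i, j) = 0"
    unfolding Omega_def by auto
  have "W' = W" "unvec (m + n) w = W" using W W'(1,2) unvec_vecm by metis+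
  then show "w \<in> carrier_vec ((m + n) * (m + n)) \<and> lmi_feasible n m M A B2 B1 (unvec (m + n) w)"
    using W W'(3) vecm_in_Gamma_plus_iff[OF W(2)] vecm_in_Gamma_plus_iff[OF Psi_carrier]
    unfolding lmi_feasible_def by (auto simp: carrier_vecI)
next
  let ?W = "unvec (m + n) w"
  assume w: "w \<in> carrier_vec ((m + n) * (m + n)) \<and> lmi_feasible n m M A B2 B1 ?W"
  then have "vecm ?W \<in> Gamma_plus (m + n)" "\<forall>i\<in>{1..M}. vecm (Psi n m (A i) (B2 i) B1 ?W) \<in> Gamma_plus n"
    by (simp_all add: vecm_in_Gamma_plus_iff[OF unvec_carrier] vecm_in_Gamma_plus_iff[OF Psi_carrier]
        lmi_feasible_def)
  moreover have "vecm ?W \<in> Omega n m"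
    unfolding Omega_def mem_Collect_eq by (rule exI[of _ ?W]) (use w in \<open>simp add: lmi_feasible_def\<close>)
  moreover have "w = vecm ?W" using w vecm_unvec by metis
  ultimately show "w \<in> X1 n m M A B2 B1"
    unfolding X1_def mem_Collect_eq by (intro exI[of _ ?W]) simp
qed

lemma lmi_feasible_convex_comb:
  assumes AB: "\<forall>i\<in>{1..M}. A i \<in> carrier_mat n n \<and> B2 i \<in> carrier_mat n m" "B1 \<in> carrier_mat n l"
    and W: "W1 \<in> carrier_mat (m + n) (m + n)" "W2 \<in> carrier_mat (m + n) (m + n)"
    and feasible: "lmi_feasible n m M A B2 B1 W1" "lmi_feasible n m M A B2 B1 W2"
    and t: "0 \<le> t" "t \<le> 1"
  shows "lmi_feasible n m M A B2 B1 ((1 - t) \<cdot>\<^sub>m W1 + t \<cdot>\<^sub>m W2)"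
  unfolding lmi_feasible_def
proof (intro conjI ballI allI impI)
  show "psd (m + n) ((1 - t) \<cdot>\<^sub>m W1 + t \<cdot>\<^sub>m W2)"
    using feasible t by (intro psd_lincomb) (auto simp: lmi_feasible_def)
  fix i assume i: "i \<in> {1..M}"
  then have "Psi n m (A i) (B2 i) B1 ((1 - t) \<cdot>\<^sub>m W1 + t \<cdot>\<^sub>m W2)
      = (1 - t) \<cdot>\<^sub>m Psi n m (A i) (B2 i) B1 W1 + t \<cdot>\<^sub>m Psi n m (A i) (B2 i) B1 W2"
    using AB W by (intro Psi_convex_comb) auto
  moreover have "psd n (Psi n m (A i) (B2 i) B1 W1)" "psd n (Psi n m (A i) (B2 i) B1 W2)"
    using feasible i by (simp_all add: lmi_feasible_def)
  ultimately show "psd n (Psi n m (A i) (B2 i) B1 ((1 - t) \<cdot>\<^sub>m W1 + t \<cdot>\<^sub>m W2))"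
    using t by (simp add: psd_lincomb)
next
  fix i j assume "i < j \<and> j < n"
  then show "((1 - t) \<cdot>\<^sub>m W1 + t \<cdot>\<^sub>m W2) $$ (i, j) = 0"
    using feasible W by (simp add: lmi_feasible_def)
qed

lemma lmi_feasible_limit:
  assumes AB: "\<forall>i\<in>{1..M}. A i \<in> carrier_mat n n \<and> B2 i \<in> carrier_mat n m" "B1 \<in> carrier_mat n l"
    and W: "\<And>r. Ws r \<in> carrier_mat (m + n) (m + n)" "W \<in> carrier_mat (m + n) (m + n)"
    and feasible: "\<And>r. lmi_feasible n m M A B2 B1 (Ws r)"
    and lim: "\<And>a b. a < m + n \<Longrightarrow> b < m + n \<Longrightarrow> (\<lambda>r. Ws r $$ (a, b)) \<longlonglongrightarrow> W $$ (a, b)"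
  shows "lmi_feasible n m M A B2 B1 W"
  unfolding lmi_feasible_def
proof (intro conjI ballI allI impI)
  show "psd (m + n) W"
    using feasible by (intro psd_limit[OF _ W(2) lim]) (simp_all add: lmi_feasible_def)
  fix i assume i: "i \<in> {1..M}"
  then have "A i \<in> carrier_mat n n" "B2 i \<in> carrier_mat n m" using AB by auto
  then show "psd n (Psi n m (A i) (B2 i) B1 W)"
    using feasible i
    by (intro psd_limit[OF _ Psi_carrier tendsto_index_Psi[OF _ _ AB(2) W lim]])
      (simp_all add: lmi_feasible_def)
next
  fix i j assume ij: "i < j \<and> j < n"
  then have "(\<lambda>r. Ws r $$ (i, j)) = (\<lambda>r. 0)" using feasible by (auto simp: lmi_feasible_def)
  then show "W $$ (i, j) = 0" using lim[of i j] ij by (simp add: LIMSEQ_const_iff)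
qed

lemma convex_X1:
  assumes "\<forall>i\<in>{1..M}. A i \<in> carrier_mat n n \<and> B2 i \<in> carrier_mat n m" "B1 \<in> carrier_mat n l"
    and "w1 \<in> X1 n m M A B2 B1" "w2 \<in> X1 n m M A B2 B1" "0 \<le> t" "t \<le> 1"
  shows "(1 - t) \<cdot>\<^sub>v w1 + t \<cdot>\<^sub>v w2 \<in> X1 n m M A B2 B1"
proof -
  have w: "w1 \<in> carrier_vec ((m + n) * (m + n))" "w2 \<in> carrier_vec ((m + n) * (m + n))"
    "lmi_feasible n m M A B2 B1 (unvec (m + n) w1)" "lmi_feasible n m M A B2 B1 (unvec (m + n) w2)"
    using assms(3,4) by (simp_all add: X1_iff_lmi_feasible)
  then have "lmi_feasible n m M A B2 B1 (unvec (m + n) ((1 - t) \<cdot>\<^sub>v w1 + t \<cdot>\<^sub>v w2))"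
    unfolding unvec_lincomb[OF w(1,2)]
    by (intro lmi_feasible_convex_comb[OF assms(1,2) unvec_carrier unvec_carrier _ _ assms(5,6)])
  then show ?thesis using w(1,2) by (simp add: X1_iff_lmi_feasible)
qed

lemma closed_X1:
  assumes "\<forall>i\<in>{1..M}. A i \<in> carrier_mat n n \<and> B2 i \<in> carrier_mat n m" "B1 \<in> carrier_mat n l"
    and "\<And>r. ws r \<in> X1 n m M A B2 B1" "w \<in> carrier_vec ((m + n) * (m + n))"
    and "converges_coordwise ((m + n) * (m + n)) ws w"
  shows "w \<in> X1 n m M A B2 B1"
proof -
  have "lmi_feasible n m M A B2 B1 (unvec (m + n) w)"
  proof (rule lmi_feasible_limit[OF assms(1,2), where Ws = "\<lambda>r. unvec (m + n) (ws r)"])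
    show "lmi_feasible n m M A B2 B1 (unvec (m + n) (ws r))" for r
      using assms(3) X1_iff_lmi_feasible by blast
    show "(\<lambda>r. unvec (m + n) (ws r) $$ (a, b)) \<longlonglongrightarrow> unvec (m + n) w $$ (a, b)"
      if "a < m + n" "b < m + n" for a b
      using assms(5) that column_major_index_less unfolding converges_coordwise_def by simp
  qed simp_all
  then show ?thesis using assms(4) by (simp add: X1_iff_lmi_feasible)
qed

section \<open>Descent, proximal steps and directional derivatives\<close>

lemma sufficient_decrease_tendsto_zero:
  fixes \<Phi> \<Delta> :: "nat \<Rightarrow> real"
  assumes decrease: "\<And>r. \<Phi> (Suc r) + \<Delta> r \<le> \<Phi> r" and nonneg: "\<And>r. 0 \<le> \<Delta> r"
    and bounded: "\<And>r. L \<le> \<Phi> r"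
  shows "\<Delta> \<longlonglongrightarrow> 0"
proof -
  have "\<Phi> (Suc r) \<le> \<Phi> r" for r
    using decrease[of r] nonneg[of r] by linarith
  then have "decseq \<Phi>"
    by (rule decseq_SucI)
  then obtain l where "\<Phi> \<longlonglongrightarrow> l"
    using bounded decseq_convergent by blast
  then have lim: "(\<lambda>r. \<Phi> r - \<Phi> (Suc r)) \<longlonglongrightarrow> 0"
    using tendsto_diff[OF _ LIMSEQ_Suc] by fastforce
  have le: "\<Delta> r \<le> \<Phi> r - \<Phi> (Suc r)" for r
    using decrease[of r] by linarith
  show ?thesis
    by (rule tendsto_sandwich[OF _ _ tendsto_const lim]) (simp_all add: always_eventually nonneg le)
qed

lemma proximal_minimizer_is_minimizer:
  fixes F q :: "real vec \<Rightarrow> real"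
  assumes segment: "\<And>t. 0 < t \<Longrightarrow> t \<le> 1 \<Longrightarrow> (1 - t) \<cdot>\<^sub>v z + t \<cdot>\<^sub>v w \<in> S"
    and convex: "\<And>t. 0 < t \<Longrightarrow> t \<le> 1 \<Longrightarrow> F ((1 - t) \<cdot>\<^sub>v z + t \<cdot>\<^sub>v w) \<le> (1 - t) * F z + t * F w"
    and prox: "\<And>v. v \<in> S \<Longrightarrow> F z \<le> F v + a * q v"
    and quadratic: "\<And>t. q ((1 - t) \<cdot>\<^sub>v z + t \<cdot>\<^sub>v w) = t\<^sup>2 * q w"
  shows "F z \<le> F w"
proof (rule tendsto_lowerbound)
  show "((\<lambda>t. F w + a * t * q w) \<longlongrightarrow> F w) (at_right 0)"
    by (auto intro!: tendsto_eq_intros)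
  have "F z \<le> F w + a * t * q w" if t: "0 < t" "t < 1" for t
  proof -
    have "F z \<le> (1 - t) * F z + t * F w + a * (t\<^sup>2 * q w)"
      using prox[OF segment] convex quadratic t by (smt (verit))
    then have "t * F z \<le> t * (F w + a * t * q w)"
      by (simp add: algebra_simps power2_eq_square)
    then show ?thesis using t by simp
  qed
  then show "\<forall>\<^sub>F t in at_right 0. F z \<le> F w + a * t * q w"
    using eventually_at_right_real[of 0 1] by (auto elim: eventually_mono)
qed simp

lemma ereal_scaled_le_imp_le:
  assumes "0 < c" "ereal c * x + ereal a \<le> ereal c * ereal u + ereal b"
  shows "x \<le> ereal ((c * u + b - a) / c)"
proof (cases x)
  case (real r)
  then have "c * r + a \<le> c * u + b" using assms(2) by simp
  then show ?thesis using real assms(1) by (simp add: field_simps)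
qed (use assms in simp_all)

lemma ereal_diff_divide_nonneg: "y \<le> (x :: ereal) \<Longrightarrow> 0 < t \<Longrightarrow> 0 \<le> (x - y) / ereal t"
  by (cases x; cases y) (simp_all add: divide_ereal_def)

lemma dir_deriv_nonneg_of_min_on_ray:
  assumes "\<And>t. 0 < t \<Longrightarrow> \<phi> z \<le> \<phi> (fst z + t \<cdot>\<^sub>v fst d, snd z + t \<cdot>\<^sub>v snd d)"
  shows "0 \<le> dir_deriv \<phi> z d"
  unfolding dir_deriv_def
proof (rule Liminf_bounded, rule eventually_mono[OF eventually_at_right_less])
  fix t :: real assume "0 < t"
  show "0 \<le> (\<phi> (fst z + t \<cdot>\<^sub>v fst d, snd z + t \<cdot>\<^sub>v snd d) - \<phi> z) / ereal t"
    by (rule ereal_diff_divide_nonneg[OF assms[OF \<open>0 < t\<close>] \<open>0 < t\<close>])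
qed

lemma stationary_of_regular_blockwise_min:
  assumes "regular_at \<phi> N1 N2 z"
    and z: "fst z \<in> carrier_vec N1" "snd z \<in> carrier_vec N2"
    and Dom: "Dom \<subseteq> carrier_vec N1 \<times> carrier_vec N2"
    and min1: "\<And>w. \<phi> z \<le> \<phi> (w, snd z)" and min2: "\<And>v. \<phi> z \<le> \<phi> (fst z, v)"
  shows "stationary \<phi> Dom z"
  unfolding stationary_def
proof (intro allI impI)
  fix d assume "(fst z + fst d, snd z + snd d) \<in> Dom"
  with Dom have "(fst z + fst d, snd z + snd d) \<in> carrier_vec N1 \<times> carrier_vec N2"
    by (rule subsetD)
  then have d: "fst d \<in> carrier_vec N1" "snd d \<in> carrier_vec N2"
    by (metis carrier_vecD carrier_vecI index_add_vec(2) mem_Times_iff fst_conv snd_conv)+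
  have "0 \<le> dir_deriv \<phi> z (fst d, 0\<^sub>v N2)"
  proof (rule dir_deriv_nonneg_of_min_on_ray)
    fix t :: real
    have "snd z + t \<cdot>\<^sub>v 0\<^sub>v N2 = snd z" using z by auto
    then show "\<phi> z \<le> \<phi> (fst z + t \<cdot>\<^sub>v fst (fst d, 0\<^sub>v N2), snd z + t \<cdot>\<^sub>v snd (fst d, 0\<^sub>v N2))"
      using min1 by simp
  qed
  moreover have "0 \<le> dir_deriv \<phi> z (0\<^sub>v N1, snd d)"
  proof (rule dir_deriv_nonneg_of_min_on_ray)
    fix t :: real
    have "fst z + t \<cdot>\<^sub>v 0\<^sub>v N1 = fst z" using z by auto
    then show "\<phi> z \<le> \<phi> (fst z + t \<cdot>\<^sub>v fst (0\<^sub>v N1, snd d), snd z + t \<cdot>\<^sub>v snd (0\<^sub>v N1, snd d))"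
      using min2 by simp
  qed
  ultimately show "0 \<le> dir_deriv \<phi> z d"
    using assms(1) d unfolding regular_at_def by (metis prod.collapse)
qed

section \<open>The convex conjugate\<close>

lemma conj_fun_nonneg:
  assumes "g (0\<^sub>v N) \<le> 0"
  shows "0 \<le> conj_fun N g u"
  unfolding conj_fun_def
proof (rule SUP_upper2[of "0\<^sub>v N"])
  have "u \<bullet> 0\<^sub>v N = 0" by (auto simp: scalar_prod_def intro!: sum.neutral)
  then show "0 \<le> ereal (u \<bullet> 0\<^sub>v N - g (0\<^sub>v N))" using assms by simp
qed simp

lemma conj_fun_zero_le:
  assumes "\<And>x. x \<in> carrier_vec N \<Longrightarrow> - B \<le> g x"
  shows "conj_fun N g (0\<^sub>v N) \<le> ereal B"
  unfolding conj_fun_def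
proof (rule SUP_least)
  fix x :: "real vec" assume "x \<in> carrier_vec N"
  then have "0\<^sub>v N \<bullet> x = 0" "- B \<le> g x" using assms by auto
  then show "ereal (0\<^sub>v N \<bullet> x - g x) \<le> ereal B" by simp
qed

lemma conj_fun_lsc:
  assumes us: "\<And>j. us j \<in> carrier_vec N" "u \<in> carrier_vec N" and lim: "converges_coordwise N us u"
  shows "conj_fun N g u \<le> Liminf sequentially (\<lambda>j. conj_fun N g (us j))"
  unfolding conj_fun_def
proof (rule SUP_least)
  fix x :: "real vec" assume x: "x \<in> carrier_vec N"
  have "(\<lambda>j. x \<bullet> us j - g x) \<longlonglongrightarrow> x \<bullet> u - g x"
    by (intro tendsto_diff tendsto_scalar_prod_coordwise[OF us lim] tendsto_const)
  then have "(\<lambda>j. ereal (us j \<bullet> x - g x)) \<longlonglongrightarrow> ereal (u \<bullet> x - g x)"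
    using comm_scalar_prod[OF us(1) x] comm_scalar_prod[OF us(2) x] by (simp add: tendsto_ereal)
  then have "ereal (u \<bullet> x - g x) = Liminf sequentially (\<lambda>j. ereal (us j \<bullet> x - g x))"
    by (rule lim_imp_Liminf[OF trivial_limit_sequentially, symmetric])
  also have "\<dots> \<le> Liminf sequentially (\<lambda>j. SUP x\<in>carrier_vec N. ereal (us j \<bullet> x - g x))"
    using x by (intro Liminf_mono always_eventually allI SUP_upper)
  finally show "ereal (u \<bullet> x - g x) \<le> Liminf sequentially (\<lambda>j. SUP x\<in>carrier_vec N. ereal (us j \<bullet> x - g x))" .
qed

lemma gsig_zero: "gsig \<sigma> (0\<^sub>v N) = 0"
  by (simp add: gsig_def fsig_def)

lemma gsig_lower_bound: "x \<in> carrier_vec N \<Longrightarrow> - real N \<le> gsig \<sigma> x"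
  unfolding gsig_def fsig_def using sum_bounded_above[of "{..<N}" "\<lambda>l. 1 - exp (- x $ l / \<sigma>)" 1]
  by simp

section \<open>Alternating proximal scheme\<close>

definition block_objective ::
    "real vec set \<Rightarrow> nat \<Rightarrow> real vec \<Rightarrow> real mat \<Rightarrow> (real vec \<Rightarrow> ereal) \<Rightarrow> real
      \<Rightarrow> real vec \<times> real vec \<Rightarrow> ereal" where
  "block_objective X K c P h \<gamma> z =
     (if fst z \<in> X \<and> snd z \<in> nonneg_orthant K
      then ereal (c \<bullet> fst z) + ereal \<gamma> * h (snd z) + ereal (\<gamma> * (snd z \<bullet> vabs (P *\<^sub>v fst z)))
      else \<infinity>)"

locale alternating_prox_data =
  fixes N K :: nat and X :: "real vec set" and P :: "real mat" and h :: "real vec \<Rightarrow> ereal"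
    and \<gamma> lam :: real
  assumes X_carrier: "X \<subseteq> carrier_vec N"
    and convex_X: "\<And>w1 w2 t. w1 \<in> X \<Longrightarrow> w2 \<in> X \<Longrightarrow> 0 \<le> t \<Longrightarrow> t \<le> 1 \<Longrightarrow> (1 - t) \<cdot>\<^sub>v w1 + t \<cdot>\<^sub>v w2 \<in> X"
    and closed_X: "\<And>ws w. (\<And>r. ws r \<in> X) \<Longrightarrow> w \<in> carrier_vec N \<Longrightarrow> converges_coordwise N ws w \<Longrightarrow> w \<in> X"
    and P_carrier: "P \<in> carrier_mat K N"
    and h_nonneg: "\<And>v. 0 \<le> h v"
    and h_zero_finite: "h (0\<^sub>v K) < \<infinity>"
    and h_lsc: "\<And>ys v. (\<And>j. ys j \<in> carrier_vec K) \<Longrightarrow> v \<in> carrier_vec K \<Longrightarrow> converges_coordwise K ys v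
      \<Longrightarrow> h v \<le> Liminf sequentially (\<lambda>j. h (ys j))"
    and gamma_pos: "0 < \<gamma>" and lam_pos: "0 < lam"
begin

abbreviation (input) Y :: "real vec set" where "Y \<equiv> nonneg_orthant K"

abbreviation coupling :: "real vec \<Rightarrow> real vec \<Rightarrow> real" where
  "coupling v w \<equiv> v \<bullet> vabs (P *\<^sub>v w)"

lemma Y_carrier: "v \<in> Y \<Longrightarrow> v \<in> carrier_vec K"
  by (simp add: nonneg_orthant_def)

lemma coupling_nonneg_on: "w \<in> X \<Longrightarrow> v \<in> Y \<Longrightarrow> 0 \<le> coupling v w"
  using coupling_nonneg[OF P_carrier] X_carrier by blast

end

locale alternating_prox_scheme = alternating_prox_data +
  fixes c :: "real vec" and Wt y :: "nat \<Rightarrow> real vec"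
  assumes Wt0: "Wt 0 \<in> X"
    and odd_step: "\<And>r. 1 \<le> r \<Longrightarrow> odd r \<Longrightarrow> Wt r = Wt (r - 1) \<and> y r \<in> nonneg_orthant K \<and>
      (\<forall>v\<in>nonneg_orthant K. ereal \<gamma> * h (y r) + ereal (\<gamma> * (y r \<bullet> vabs (P *\<^sub>v Wt (r - 1))))
         \<le> ereal \<gamma> * h v + ereal (\<gamma> * (v \<bullet> vabs (P *\<^sub>v Wt (r - 1)))))"
    and even_step: "\<And>r. 1 \<le> r \<Longrightarrow> even r \<Longrightarrow> y r = y (r - 1) \<and> Wt r \<in> X \<and>
      (\<forall>w\<in>X. c \<bullet> Wt r + \<gamma> * (y (r - 1) \<bullet> vabs (P *\<^sub>v Wt r))
           + 1 / (2 * lam) * ((Wt r - Wt (r - 1)) \<bullet> (Wt r - Wt (r - 1)))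
         \<le> c \<bullet> w + \<gamma> * (y (r - 1) \<bullet> vabs (P *\<^sub>v w)) + 1 / (2 * lam) * ((w - Wt (r - 1)) \<bullet> (w - Wt (r - 1))))"
begin

abbreviation H :: "real vec \<times> real vec \<Rightarrow> ereal" where
  "H \<equiv> block_objective X K c P h \<gamma>"

lemma H_on_domain: "w \<in> X \<Longrightarrow> v \<in> Y \<Longrightarrow> H (w, v) = ereal (c \<bullet> w) + (ereal \<gamma> * h v + ereal (\<gamma> * coupling v w))"
  unfolding block_objective_def by (simp add: add.assoc)

lemma H_off_domain: "w \<notin> X \<or> v \<notin> Y \<Longrightarrow> H (w, v) = \<infinity>"
  unfolding block_objective_def by auto

lemma H_lower_bound: "ereal (c \<bullet> w) \<le> H (w, v)"
proof (cases "w \<in> X \<and> v \<in> Y")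
  case True
  then have "0 \<le> ereal \<gamma> * h v + ereal (\<gamma> * coupling v w)"
    using gamma_pos h_nonneg coupling_nonneg_on by simp
  then show ?thesis
    using True by (simp add: H_on_domain add_increasing2)
qed (use H_off_domain in auto)

lemma Wt_in_X: "Wt r \<in> X"
proof (induction r)
  case (Suc r)
  then show ?case
    using odd_step[of "Suc r"] even_step[of "Suc r"] by (cases "odd (Suc r)") auto
qed (rule Wt0)

lemma y_in_Y: "1 \<le> r \<Longrightarrow> y r \<in> Y"
  using odd_step[of r] even_step[of r] odd_step[of "r - 1"]
  by (cases "odd r") (auto simp: odd_pos)

lemma odd_step_minimizes_H:
  assumes "1 \<le> r" "odd r"
  shows "H (Wt r, y r) \<le> H (Wt r, v)"
proof (cases "v \<in> Y")
  case True
  have "ereal \<gamma> * h (y r) + ereal (\<gamma> * coupling (y r) (Wt r)) \<le> ereal \<gamma> * h v + ereal (\<gamma> * coupling v (Wt r))"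
    using odd_step[OF assms] True by metis
  then show ?thesis
    using True Wt_in_X y_in_Y[OF assms(1)] by (simp add: H_on_domain add_left_mono)
qed (simp add: H_off_domain)

definition step_cost :: "nat \<Rightarrow> real" where
  "step_cost r = (Wt (Suc r) - Wt r) \<bullet> (Wt (Suc r) - Wt r) / (2 * lam)"

lemma step_cost_nonneg: "0 \<le> step_cost r"
  using lam_pos scalar_prod_self_nonneg by (simp add: step_cost_def)

lemma Wt_carrier: "Wt r \<in> carrier_vec N"
  using Wt_in_X X_carrier by blast

lemma H_decrease: "H (Wt (Suc r), y (Suc r)) + ereal (step_cost r) \<le> H (Wt r, y r)"
proof (cases "odd (Suc r)")
  case True
  then have "Wt (Suc r) = Wt r" using odd_step[of "Suc r"] by simp
  then have "step_cost r = 0" using Wt_carrier[of r] by (simp add: step_cost_def)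
  moreover have "H (Wt (Suc r), y (Suc r)) \<le> H (Wt (Suc r), y r)"
    using odd_step_minimizes_H True by simp
  ultimately show ?thesis using \<open>Wt (Suc r) = Wt r\<close> by simp
next
  case False
  then have "odd r" by simp
  then have "1 \<le> r" using odd_pos[of r] by linarith
  then have y: "y (Suc r) = y r" "y r \<in> Y" and W: "Wt (Suc r) \<in> X"
    using even_step[of "Suc r"] False y_in_Y by auto
  have "c \<bullet> Wt (Suc r) + \<gamma> * coupling (y r) (Wt (Suc r)) + step_cost r
      \<le> c \<bullet> Wt r + \<gamma> * coupling (y r) (Wt r) + 1 / (2 * lam) * ((Wt r - Wt r) \<bullet> (Wt r - Wt r))"
    using even_step[of "Suc r"] False Wt_in_X[of r] unfolding step_cost_def by simp
  then have "c \<bullet> Wt (Suc r) + \<gamma> * coupling (y r) (Wt (Suc r)) + step_cost r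
      \<le> c \<bullet> Wt r + \<gamma> * coupling (y r) (Wt r)"
    using Wt_carrier[of r] by simp
  then show ?thesis
    using y W Wt_in_X[of r] h_nonneg[of "y r"] gamma_pos by (cases "h (y r)") (simp_all add: H_on_domain)
qed

lemma H_iterate_finite: "1 \<le> r \<Longrightarrow> H (Wt r, y r) < \<infinity>"
proof (induction r rule: dec_induct)
  case base
  have "H (Wt 1, y 1) \<le> H (Wt 1, 0\<^sub>v K)"
    by (rule odd_step_minimizes_H) simp_all
  also have "\<dots> < \<infinity>"
    using Wt_in_X h_zero_finite h_nonneg[of "0\<^sub>v K"] gamma_pos
    by (cases "h (0\<^sub>v K)") (simp_all add: H_on_domain nonneg_orthant_def)
  finally show ?case .
next
  case (step r)
  have "H (Wt (Suc r), y (Suc r)) \<le> H (Wt (Suc r), y (Suc r)) + ereal (step_cost r)"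
    using step_cost_nonneg by (simp add: add_increasing2)
  also have "\<dots> \<le> H (Wt r, y r)" by (rule H_decrease)
  finally show ?case using step.IH by (rule order.strict_trans1)
qed

definition obj :: "nat \<Rightarrow> real" where
  "obj r = real_of_ereal (H (Wt r, y r))"

lemma H_iterate_eq_obj: "1 \<le> r \<Longrightarrow> H (Wt r, y r) = ereal (obj r)"
  using H_iterate_finite H_lower_bound[of "Wt r" "y r"] unfolding obj_def
  by (cases "H (Wt r, y r)") auto

lemma obj_decrease: "1 \<le> r \<Longrightarrow> obj (Suc r) + step_cost r \<le> obj r"
  using H_decrease[of r] H_iterate_eq_obj[of r] H_iterate_eq_obj[of "Suc r"] by simp

lemma obj_ge: "1 \<le> r \<Longrightarrow> c \<bullet> Wt r \<le> obj r"
  using H_lower_bound[of "Wt r" "y r"] H_iterate_eq_obj[of r] by simp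

lemma obj_antimono:
  assumes "1 \<le> r" "r \<le> s"
  shows "obj s \<le> obj r"
  using assms(2)
proof (induction s rule: dec_induct)
  case (step s)
  then show ?case using assms(1) obj_decrease[of s] step_cost_nonneg[of s] by simp
qed simp

end

locale alternating_prox_cluster = alternating_prox_scheme +
  fixes \<phi> :: "nat \<Rightarrow> nat" and z1 z2 :: "real vec"
  assumes subseq: "strict_mono \<phi>"
    and z1_carrier: "z1 \<in> carrier_vec N" and z2_carrier: "z2 \<in> carrier_vec K"
    and Wt_subseq_lim: "converges_coordwise N (\<lambda>j. Wt (\<phi> j)) z1"
    and y_subseq_lim: "converges_coordwise K (\<lambda>j. y (\<phi> j)) z2"
begin

lemma obj_bounded_below: "\<exists>L. \<forall>r\<ge>1. L \<le> obj r"
proof -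
  have "(\<lambda>j. c \<bullet> Wt (\<phi> j)) \<longlonglongrightarrow> c \<bullet> z1"
    by (rule tendsto_scalar_prod_coordwise[OF Wt_carrier z1_carrier Wt_subseq_lim])
  then have "\<forall>\<^sub>F j in sequentially. c \<bullet> z1 - 1 < c \<bullet> Wt (\<phi> j)"
    by (rule order_tendstoD) simp
  then obtain j0 where j0: "\<And>j. j0 \<le> j \<Longrightarrow> c \<bullet> z1 - 1 < c \<bullet> Wt (\<phi> j)"
    unfolding eventually_sequentially by blast
  have "c \<bullet> z1 - 1 \<le> obj r" if "1 \<le> r" for r
  proof -
    let ?s = "\<phi> (max j0 r)"
    have "r \<le> ?s" using seq_suble[OF subseq, of "max j0 r"] by simp
    then show ?thesis
      using that j0[of "max j0 r"] obj_ge[of ?s] obj_antimono[of r ?s] by simp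
  qed
  then show ?thesis by blast
qed

lemma step_cost_tendsto_zero: "step_cost \<longlonglongrightarrow> 0"
proof -
  obtain L where "\<forall>r\<ge>1. L \<le> obj r" using obj_bounded_below by blast
  then have "(\<lambda>r. step_cost (Suc r)) \<longlonglongrightarrow> 0"
    using obj_decrease step_cost_nonneg
    by (intro sufficient_decrease_tendsto_zero[where \<Phi> = "\<lambda>r. obj (Suc r)" and L = L]) simp_all
  then show ?thesis by (rule LIMSEQ_imp_Suc)
qed

lemma coord_steps_tendsto_zero:
  assumes "k < N"
  shows "(\<lambda>r. Wt (Suc r) $ k - Wt r $ k) \<longlonglongrightarrow> 0"
proof (rule tendsto_0_le[where K = 1])
  show "(\<lambda>r. sqrt (2 * lam * step_cost r)) \<longlonglongrightarrow> 0"
    using tendsto_real_sqrt[OF tendsto_mult_right_zero[OF step_cost_tendsto_zero, of "2 * lam"]] by simp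
  have "\<bar>Wt (Suc r) $ k - Wt r $ k\<bar> \<le> \<bar>sqrt (2 * lam * step_cost r)\<bar>" for r
  proof -
    have "\<bar>Wt (Suc r) $ k - Wt r $ k\<bar> = sqrt ((Wt (Suc r) $ k - Wt r $ k)\<^sup>2)"
      by simp
    also have "\<dots> \<le> sqrt (2 * lam * step_cost r)"
      using coord_diff_sq_le_sqdist[OF Wt_carrier Wt_carrier assms, of "Suc r" r] lam_pos
      by (intro real_sqrt_le_mono) (simp add: step_cost_def)
    also have "\<dots> \<le> \<bar>sqrt (2 * lam * step_cost r)\<bar>"
      by (rule abs_ge_self)
    finally show ?thesis .
  qed
  then show "\<forall>\<^sub>F r in sequentially. norm (Wt (Suc r) $ k - Wt r $ k) \<le> norm (sqrt (2 * lam * step_cost r)) * 1"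
    by (simp add: always_eventually)
qed

text \<open>The last \<open>y\<close>-update at or before \<open>\<phi> (Suc j)\<close>; the shift by one keeps it away from index 0.\<close>

definition prev_odd :: "nat \<Rightarrow> nat" where
  "prev_odd j = (if odd (\<phi> (Suc j)) then \<phi> (Suc j) else \<phi> (Suc j) - 1)"

lemma subseq_Suc_ge: "Suc j \<le> \<phi> (Suc j)"
  by (rule seq_suble[OF subseq])

lemma prev_odd_ge: "j \<le> prev_odd j" and prev_odd_odd: "odd (prev_odd j)"
  using subseq_Suc_ge[of j] unfolding prev_odd_def by (auto elim: evenE)

lemma prev_odd_pos: "1 \<le> prev_odd j"
  using odd_pos[OF prev_odd_odd[of j]] by linarith

lemma y_prev_odd: "y (prev_odd j) = y (\<phi> (Suc j))"
  using even_step[of "\<phi> (Suc j)"] subseq_Suc_ge[of j] unfolding prev_odd_def by auto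

lemma Wt_subseq_Suc_eq:
  "Wt (\<phi> (Suc j)) = (if odd (\<phi> (Suc j)) then Wt (prev_odd j) else Wt (Suc (prev_odd j)))"
  using subseq_Suc_ge[of j] unfolding prev_odd_def by auto

lemma Wt_prev_odd_lim:
  "converges_coordwise N (\<lambda>j. Wt (prev_odd j)) z1" "converges_coordwise N (\<lambda>j. Wt (Suc (prev_odd j))) z1"
proof -
  have prev_odd_at_top: "filterlim prev_odd at_top sequentially"
    using prev_odd_ge by (intro filterlim_at_top_mono[OF filterlim_ident]) (simp add: always_eventually)
  have "(\<lambda>j. Wt (prev_odd j) $ k) \<longlonglongrightarrow> z1 $ k \<and> (\<lambda>j. Wt (Suc (prev_odd j)) $ k) \<longlonglongrightarrow> z1 $ k"
    if "k < N" for k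
  proof -
    define a where "a j = Wt (prev_odd j) $ k" for j
    define b where "b j = Wt (Suc (prev_odd j)) $ k" for j
    define e where "e j = (if odd (\<phi> (Suc j)) then 0 else b j - a j)" for j
    have gap: "(\<lambda>j. b j - a j) \<longlonglongrightarrow> 0"
      unfolding a_def b_def by (rule filterlim_compose[OF coord_steps_tendsto_zero[OF that] prev_odd_at_top])
    then have e: "e \<longlonglongrightarrow> 0"
      by (rule tendsto_0_le[where K = 1]) (simp add: e_def always_eventually)
    have "(\<lambda>j. Wt (\<phi> (Suc j)) $ k) \<longlonglongrightarrow> z1 $ k"
      using LIMSEQ_Suc[of "\<lambda>j. Wt (\<phi> j) $ k"] Wt_subseq_lim that unfolding converges_coordwise_def by simp
    moreover have "Wt (\<phi> (Suc j)) $ k = a j + e j" for j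
      unfolding a_def b_def e_def by (subst Wt_subseq_Suc_eq) simp
    ultimately have "(\<lambda>j. a j + e j) \<longlonglongrightarrow> z1 $ k" by simp
    then have "a \<longlonglongrightarrow> z1 $ k"
      using tendsto_diff[OF _ e] by fastforce
    moreover have "b \<longlonglongrightarrow> z1 $ k"
      using tendsto_add[OF \<open>a \<longlonglongrightarrow> z1 $ k\<close> gap] by simp
    ultimately show ?thesis unfolding a_def b_def by simp
  qed
  then show "converges_coordwise N (\<lambda>j. Wt (prev_odd j)) z1"
    "converges_coordwise N (\<lambda>j. Wt (Suc (prev_odd j))) z1"
    unfolding converges_coordwise_def by simp_all
qed

lemma y_prev_odd_lim: "converges_coordwise K (\<lambda>j. y (prev_odd j)) z2"
  using y_subseq_lim unfolding converges_coordwise_def y_prev_odd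
  by (auto intro: LIMSEQ_Suc[where f = "\<lambda>j. y (\<phi> j) $ _"])

lemma z1_in_X: "z1 \<in> X"
  by (rule closed_X[OF Wt_in_X z1_carrier Wt_subseq_lim])

lemma z2_in_Y: "z2 \<in> Y"
proof -
  have "0 \<le> z2 $ i" if "i < K" for i
  proof (rule LIMSEQ_le_const)
    show "(\<lambda>j. y (prev_odd j) $ i) \<longlonglongrightarrow> z2 $ i"
      using y_prev_odd_lim that unfolding converges_coordwise_def by simp
    show "\<exists>N. \<forall>j\<ge>N. 0 \<le> y (prev_odd j) $ i"
      using y_in_Y[OF prev_odd_pos] that by (auto simp: nonneg_orthant_def)
  qed
  then show ?thesis using z2_carrier by (simp add: nonneg_orthant_def)
qed

lemma prox_inequality_at_limit:
  assumes "w \<in> X"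
  shows "c \<bullet> z1 + \<gamma> * coupling z2 z1 \<le> c \<bullet> w + \<gamma> * coupling z2 w + 1 / (2 * lam) * ((w - z1) \<bullet> (w - z1))"
proof (rule LIMSEQ_le)
  have w: "w \<in> carrier_vec N" using assms X_carrier by blast
  show "(\<lambda>j. c \<bullet> Wt (Suc (prev_odd j)) + \<gamma> * coupling (y (prev_odd j)) (Wt (Suc (prev_odd j))))
      \<longlonglongrightarrow> c \<bullet> z1 + \<gamma> * coupling z2 z1"
    by (intro tendsto_intros tendsto_scalar_prod_coordwise[OF Wt_carrier z1_carrier Wt_prev_odd_lim(2)]
        tendsto_coupling_coordwise[OF P_carrier Wt_carrier z1_carrier Wt_prev_odd_lim(2) y_prev_odd_lim])
  have "converges_coordwise N (\<lambda>j. w) w" by (simp add: converges_coordwise_def)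
  then show "(\<lambda>j. c \<bullet> w + \<gamma> * coupling (y (prev_odd j)) w
        + 1 / (2 * lam) * ((w - Wt (prev_odd j)) \<bullet> (w - Wt (prev_odd j))))
      \<longlonglongrightarrow> c \<bullet> w + \<gamma> * coupling z2 w + 1 / (2 * lam) * ((w - z1) \<bullet> (w - z1))"
    by (intro tendsto_intros tendsto_coupling_coordwise[OF P_carrier w w _ y_prev_odd_lim]
        tendsto_sqdist_coordwise[OF Wt_carrier z1_carrier w Wt_prev_odd_lim(1)])
  have step: "c \<bullet> Wt (Suc (prev_odd j)) + \<gamma> * coupling (y (prev_odd j)) (Wt (Suc (prev_odd j))) + step_cost (prev_odd j)
      \<le> c \<bullet> w + \<gamma> * coupling (y (prev_odd j)) w
        + 1 / (2 * lam) * ((w - Wt (prev_odd j)) \<bullet> (w - Wt (prev_odd j)))" for j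
    using even_step[of "Suc (prev_odd j)"] prev_odd_odd[of j] assms unfolding step_cost_def by simp
  have "c \<bullet> Wt (Suc (prev_odd j)) + \<gamma> * coupling (y (prev_odd j)) (Wt (Suc (prev_odd j)))
      \<le> c \<bullet> w + \<gamma> * coupling (y (prev_odd j)) w
        + 1 / (2 * lam) * ((w - Wt (prev_odd j)) \<bullet> (w - Wt (prev_odd j)))" for j
    using step[of j] step_cost_nonneg[of "prev_odd j"] by linarith
  then show "\<exists>N. \<forall>j\<ge>N. c \<bullet> Wt (Suc (prev_odd j)) + \<gamma> * coupling (y (prev_odd j)) (Wt (Suc (prev_odd j)))
      \<le> c \<bullet> w + \<gamma> * coupling (y (prev_odd j)) w
        + 1 / (2 * lam) * ((w - Wt (prev_odd j)) \<bullet> (w - Wt (prev_odd j)))"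
    by blast
qed

lemma W_block_min_at_limit:
  assumes "w \<in> X"
  shows "c \<bullet> z1 + \<gamma> * coupling z2 z1 \<le> c \<bullet> w + \<gamma> * coupling z2 w"
proof (rule proximal_minimizer_is_minimizer[where S = X and q = "\<lambda>v. (v - z1) \<bullet> (v - z1)"])
  have w: "w \<in> carrier_vec N" using assms X_carrier by blast
  show "(1 - t) \<cdot>\<^sub>v z1 + t \<cdot>\<^sub>v w \<in> X" if "0 < t" "t \<le> 1" for t
    using convex_X[OF z1_in_X assms] that by simp
  show "c \<bullet> ((1 - t) \<cdot>\<^sub>v z1 + t \<cdot>\<^sub>v w) + \<gamma> * coupling z2 ((1 - t) \<cdot>\<^sub>v z1 + t \<cdot>\<^sub>v w)
      \<le> (1 - t) * (c \<bullet> z1 + \<gamma> * coupling z2 z1) + t * (c \<bullet> w + \<gamma> * coupling z2 w)"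
    if "0 < t" "t \<le> 1" for t
  proof -
    have "\<gamma> * coupling z2 ((1 - t) \<cdot>\<^sub>v z1 + t \<cdot>\<^sub>v w) \<le> \<gamma> * ((1 - t) * coupling z2 z1 + t * coupling z2 w)"
      using coupling_convex[OF P_carrier z1_carrier w z2_in_Y, of t] that gamma_pos by simp
    then show ?thesis by (simp add: scalar_prod_convex_comb[OF z1_carrier w] algebra_simps)
  qed
  show "((1 - t) \<cdot>\<^sub>v z1 + t \<cdot>\<^sub>v w - z1) \<bullet> ((1 - t) \<cdot>\<^sub>v z1 + t \<cdot>\<^sub>v w - z1) = t\<^sup>2 * ((w - z1) \<bullet> (w - z1))" for t
    by (rule sqdist_convex_comb[OF z1_carrier w])
qed (rule prox_inequality_at_limit)

lemma y_block_min_at_limit: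
  assumes "v \<in> Y"
  shows "ereal \<gamma> * h z2 + ereal (\<gamma> * coupling z2 z1) \<le> ereal \<gamma> * h v + ereal (\<gamma> * coupling v z1)"
proof (cases "h v")
  case (real hv)
  define B where "B j = (\<gamma> * hv + \<gamma> * coupling v (Wt (prev_odd j))
      - \<gamma> * coupling (y (prev_odd j)) (Wt (prev_odd j))) / \<gamma>" for j
  define B_lim where "B_lim = (\<gamma> * hv + \<gamma> * coupling v z1 - \<gamma> * coupling z2 z1) / \<gamma>"
  have "h (y (prev_odd j)) \<le> ereal (B j)" for j
  proof -
    have "ereal \<gamma> * h (y (prev_odd j)) + ereal (\<gamma> * coupling (y (prev_odd j)) (Wt (prev_odd j)))
        \<le> ereal \<gamma> * ereal hv + ereal (\<gamma> * coupling v (Wt (prev_odd j)))"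
      using odd_step[OF prev_odd_pos prev_odd_odd] assms real by metis
    then show ?thesis unfolding B_def by (rule ereal_scaled_le_imp_le[OF gamma_pos])
  qed
  then have "Liminf sequentially (\<lambda>j. h (y (prev_odd j))) \<le> Liminf sequentially (\<lambda>j. ereal (B j))"
    by (intro Liminf_mono always_eventually) simp
  also have "\<dots> = ereal B_lim"
  proof (rule lim_imp_Liminf[OF trivial_limit_sequentially])
    have "converges_coordwise K (\<lambda>j. v) v" by (simp add: converges_coordwise_def)
    then show "(\<lambda>j. ereal (B j)) \<longlonglongrightarrow> ereal B_lim"
      unfolding B_def B_lim_def using gamma_pos
      by (intro tendsto_ereal tendsto_intros
          tendsto_coupling_coordwise[OF P_carrier Wt_carrier z1_carrier Wt_prev_odd_lim(1)] y_prev_odd_lim)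
        simp_all
  qed
  finally have "h z2 \<le> ereal B_lim"
    using h_lsc[OF Y_carrier[OF y_in_Y[OF prev_odd_pos]] z2_carrier y_prev_odd_lim]
    by (rule order_trans[rotated])
  then obtain hz where hz: "h z2 = ereal hz" "hz \<le> B_lim"
    using h_nonneg[of z2] by (cases "h z2") auto
  then have "\<gamma> * hz \<le> \<gamma> * hv + \<gamma> * coupling v z1 - \<gamma> * coupling z2 z1"
    using gamma_pos mult_left_mono[OF hz(2), of \<gamma>] by (simp add: B_lim_def)
  then show ?thesis using hz real by simp
qed (use gamma_pos h_nonneg[of v] in simp_all)

lemma H_blockwise_min_fst: "H (z1, z2) \<le> H (w, z2)"
proof (cases "w \<in> X")
  case True
  then show ?thesis
    using W_block_min_at_limit[OF True] z1_in_X z2_in_Y gamma_pos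
    by (cases "h z2") (simp_all add: H_on_domain)
qed (simp add: H_off_domain)

lemma H_blockwise_min_snd: "H (z1, z2) \<le> H (z1, v)"
proof (cases "v \<in> Y")
  case True
  then show ?thesis
    using y_block_min_at_limit[OF True] z1_in_X z2_in_Y by (simp add: H_on_domain add_left_mono)
qed (simp add: H_off_domain)

end

lemma Pop_carrier: "Pop n m \<in> carrier_mat (m * n) ((m + n) * (m + n))"
  by (simp add: Pop_def kron_def V1_def V2_def carrier_matI)

lemma Hhat_eq_block_objective:
  assumes "0 \<le> \<gamma>"
  shows "Hhat n m M A B2 B1 C D \<gamma> \<sigma> = block_objective (X1 n m M A B2 B1) (m * n) (vecm (Rm n m C D))
    (Pop n m) (\<lambda>v. conj_fun (m * n) (gsig \<sigma>) (- v)) \<gamma>"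
proof
  fix z :: "real vec \<times> real vec"
  have "0 \<le> ereal \<gamma> * conj_fun (m * n) (gsig \<sigma>) (- snd z)"
    using assms conj_fun_nonneg[of "gsig \<sigma>"] by (simp add: gsig_zero)
  then show "Hhat n m M A B2 B1 C D \<gamma> \<sigma> z = block_objective (X1 n m M A B2 B1) (m * n) (vecm (Rm n m C D))
    (Pop n m) (\<lambda>v. conj_fun (m * n) (gsig \<sigma>) (- v)) \<gamma> z"
    unfolding Hhat_def r1_def block_objective_def by auto
qed

lemma alternating_prox_data_X1:
  assumes "\<forall>i\<in>{1..M}. A i \<in> carrier_mat n n \<and> B2 i \<in> carrier_mat n m" "B1 \<in> carrier_mat n l"
    and "0 < \<gamma>" "0 < lam"
  shows "alternating_prox_data ((m + n) * (m + n)) (m * n) (X1 n m M A B2 B1) (Pop n m)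
    (\<lambda>v. conj_fun (m * n) (gsig \<sigma>) (- v)) \<gamma> lam"
proof
  show "X1 n m M A B2 B1 \<subseteq> carrier_vec ((m + n) * (m + n))"
    by (auto simp: X1_iff_lmi_feasible)
  show "conj_fun (m * n) (gsig \<sigma>) (- 0\<^sub>v (m * n)) < \<infinity>"
    using conj_fun_zero_le[of "m * n" "real (m * n)" "gsig \<sigma>"] gsig_lower_bound by fastforce
  show "conj_fun (m * n) (gsig \<sigma>) (- v) \<le> Liminf sequentially (\<lambda>j. conj_fun (m * n) (gsig \<sigma>) (- ys j))"
    if "\<And>j. ys j \<in> carrier_vec (m * n)" "v \<in> carrier_vec (m * n)" "converges_coordwise (m * n) ys v" for ys v
    using that by (intro conj_fun_lsc converges_coordwise_uminus) simp_all
  show "(1 - t) \<cdot>\<^sub>v w1 + t \<cdot>\<^sub>v w2 \<in> X1 n m M A B2 B1"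
    if "w1 \<in> X1 n m M A B2 B1" "w2 \<in> X1 n m M A B2 B1" "0 \<le> t" "t \<le> 1" for w1 w2 t
    by (rule convex_X1[OF assms(1,2) that])
  show "w \<in> X1 n m M A B2 B1"
    if "\<And>r. ws r \<in> X1 n m M A B2 B1" "w \<in> carrier_vec ((m + n) * (m + n))"
      "converges_coordwise ((m + n) * (m + n)) ws w" for ws w
    by (rule closed_X1[OF assms(1,2) that])
  show "0 \<le> conj_fun (m * n) (gsig \<sigma>) (- v)" for v
    by (rule conj_fun_nonneg) (simp add: gsig_zero)
qed (use assms Pop_carrier in simp_all)

theorem theorem28:
  fixes n m M l q :: nat
    and A B2 :: "nat \<Rightarrow> real mat"
    and B1 C D :: "real mat"
    and \<gamma> \<sigma> lam :: real
    and Wt y :: "nat \<Rightarrow> real vec"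
    and z :: "real vec \<times> real vec"
  defines "p \<equiv> m + n"
    and "H \<equiv> Hhat n m M A B2 B1 C D \<gamma> \<sigma>"
    and "XX \<equiv> X1 n m M A B2 B1"
    and "Yp \<equiv> nonneg_orthant (m * n)"
    and "P \<equiv> Pop n m"
  assumes "n \<ge> 1" and "m \<ge> 1" and "M \<ge> 1"
    and "\<forall>i\<in>{1..M}. A i \<in> carrier_mat n n \<and> B2 i \<in> carrier_mat n m"
    and "B1 \<in> carrier_mat n l" and "C \<in> carrier_mat q n" and "D \<in> carrier_mat q m"
    and "C\<^sup>T * D = 0\<^sub>m n m"
    and "pd m (D\<^sup>T * D)" and "pd n (B1 * B1\<^sup>T)"
    and "pd n (C\<^sup>T * C)"
    and "\<gamma> > 0" and "\<sigma> > 0" and "lam > 0"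
    and "Wt 0 \<in> XX" and "y 0 \<in> Yp"
    and odd_step: "\<forall>r. r \<ge> 1 \<and> odd r \<longrightarrow>
          Wt r = Wt (r - 1) \<and> y r \<in> Yp \<and>
          (\<forall>v\<in>Yp. ereal \<gamma> * conj_fun (m * n) (gsig \<sigma>) (- y r)
                       + ereal (\<gamma> * (y r \<bullet> vabs (P *\<^sub>v Wt (r - 1))))
                    \<le> ereal \<gamma> * conj_fun (m * n) (gsig \<sigma>) (- v)
                       + ereal (\<gamma> * (v \<bullet> vabs (P *\<^sub>v Wt (r - 1)))))"
    and even_step: "\<forall>r. r \<ge> 1 \<and> even r \<longrightarrow>
          y r = y (r - 1) \<and> Wt r \<in> XX \<and>
          (\<forall>W\<in>XX. vecm (Rm n m C D) \<bullet> Wt r + \<gamma> * (y (r - 1) \<bullet> vabs (P *\<^sub>v Wt r))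
                      + 1 / (2 * lam) * ((Wt r - Wt (r - 1)) \<bullet> (Wt r - Wt (r - 1)))
                   \<le> vecm (Rm n m C D) \<bullet> W + \<gamma> * (y (r - 1) \<bullet> vabs (P *\<^sub>v W))
                      + 1 / (2 * lam) * ((W - Wt (r - 1)) \<bullet> (W - Wt (r - 1))))"
    and cluster: "fst z \<in> carrier_vec (p * p)" "snd z \<in> carrier_vec (m * n)"
      "\<exists>\<phi>. strict_mono \<phi> \<and>
           (\<forall>k<p * p. (\<lambda>r. Wt (\<phi> r) $ k) \<longlonglongrightarrow> fst z $ k) \<and>
           (\<forall>k<m * n. (\<lambda>r. y (\<phi> r) $ k) \<longlonglongrightarrow> snd z $ k)"
  shows "(\<forall>d1\<in>carrier_vec (p * p). (fst z + d1, snd z) \<in> edom H \<longrightarrow>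
             H (fst z + d1, snd z) \<ge> H z)
       \<and> (\<forall>d2\<in>carrier_vec (m * n). (fst z, snd z + d2) \<in> edom H \<longrightarrow>
             H (fst z, snd z + d2) \<ge> H z)
       \<and> (regular_at H (p * p) (m * n) z \<longrightarrow> stationary H (XX \<times> Yp) z)"
proof -
  note defs = assms(1-5)
  obtain \<phi> where \<phi>: "strict_mono \<phi>" "converges_coordwise (p * p) (\<lambda>r. Wt (\<phi> r)) (fst z)"
      "converges_coordwise (m * n) (\<lambda>r. y (\<phi> r)) (snd z)"
    using cluster(3) unfolding converges_coordwise_def by blast
  interpret cl: alternating_prox_cluster "p * p" "m * n" XX P "\<lambda>v. conj_fun (m * n) (gsig \<sigma>) (- v)" \<gamma> lam
      "vecm (Rm n m C D)" Wt y \<phi> "fst z" "snd z"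
  proof (intro alternating_prox_cluster.intro alternating_prox_scheme.intro)
    show "alternating_prox_data (p * p) (m * n) XX P (\<lambda>v. conj_fun (m * n) (gsig \<sigma>) (- v)) \<gamma> lam"
      unfolding defs using assms by (intro alternating_prox_data_X1) auto
    show "alternating_prox_scheme_axioms (m * n) XX P (\<lambda>v. conj_fun (m * n) (gsig \<sigma>) (- v)) \<gamma> lam
        (vecm (Rm n m C D)) Wt y"
      unfolding alternating_prox_scheme_axioms_def using \<open>Wt 0 \<in> XX\<close> odd_step even_step
      unfolding defs(4) by simp
    show "alternating_prox_cluster_axioms (p * p) (m * n) Wt y \<phi> (fst z) (snd z)"
      unfolding alternating_prox_cluster_axioms_def using \<phi> cluster(1,2) by simp
  qed
  have "H = cl.H"
    unfolding defs using \<open>\<gamma> > 0\<close> by (simp add: Hhat_eq_block_objective)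
  moreover have "XX \<times> Yp \<subseteq> carrier_vec (p * p) \<times> carrier_vec (m * n)"
    using cl.X_carrier cl.Y_carrier unfolding defs(4) by blast
  ultimately show ?thesis
    using cl.H_blockwise_min_fst cl.H_blockwise_min_snd cluster(1,2)
    by (auto intro: stationary_of_regular_blockwise_min)
qed

end
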